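(* For any integers $k,s\geq 2$ and any reals $K,\varepsilon>0$ there exists a constant $C=C(k,s,K,\varepsilon)>0$ such that the following holds. Let $G$ be a graph on $n$ vertices which contains no copy of $K_{s,s}$ as a subgraph, and let $V(G)=A\cup B$ be a partition with at least $e(A,B)\geq Cn^{1+1/k}$ crossing edges. Assume that the graph $G_1$ on $V(G)$ whose edges are the crossing edges (the edges of $G$ between $A$ and $B$) is $K$-almost-regular. Then at least a $(1-\varepsilon)$-fraction of the alternating paths of length $k$ in $G$ are induced subgraphs of $G$.
   Context: A graph is $K$-almost-regular if its maximum degree is at most $K$ times its minimum degree. An alternating path of length $k$ is a path in $G$ with $k$ edges (on $k+1$ distinct vertices) all of whose edges have one endpoint in $A$ and the other in $B$. Such a path is induced if $G$ has no edges between its vertices other than the path edges. *)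

theory Defs
  imports Complex_Main
begin

definition simple_graph :: "nat set \<Rightarrow> (nat \<Rightarrow> nat \<Rightarrow> bool) \<Rightarrow> bool" where
  "simple_graph V E \<longleftrightarrow> finite V \<and> (\<forall>u v. E u v \<longrightarrow> u \<in> V \<and> v \<in> V)
     \<and> (\<forall>u v. E u v \<longrightarrow> E v u) \<and> (\<forall>u. \<not> E u u)"

definition contains_Kss :: "nat set \<Rightarrow> (nat \<Rightarrow> nat \<Rightarrow> bool) \<Rightarrow> nat \<Rightarrow> bool" where
  "contains_Kss V E s \<longleftrightarrow> (\<exists>S T. S \<subseteq> V \<and> T \<subseteq> V \<and> S \<inter> T = {} \<and>
       card S = s \<and> card T = s \<and> (\<forall>x\<in>S. \<forall>y\<in>T. E x y))"

definition crossing :: "nat set \<Rightarrow> nat set \<Rightarrow> (nat \<Rightarrow> nat \<Rightarrow> bool) \<Rightarrow> nat \<Rightarrow> nat \<Rightarrow> bool" where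
  "crossing A B E u v \<longleftrightarrow> E u v \<and> ((u \<in> A \<and> v \<in> B) \<or> (u \<in> B \<and> v \<in> A))"

text \<open>e(A,B): number of edges with one endpoint in A and one in B
  (for disjoint A, B each such edge is counted once, as the pair (a,b)).\<close>
definition cross_edges :: "nat set \<Rightarrow> nat set \<Rightarrow> (nat \<Rightarrow> nat \<Rightarrow> bool) \<Rightarrow> nat" where
  "cross_edges A B E = card {(a, b). a \<in> A \<and> b \<in> B \<and> E a b}"

definition cross_deg :: "nat set \<Rightarrow> nat set \<Rightarrow> nat set \<Rightarrow> (nat \<Rightarrow> nat \<Rightarrow> bool) \<Rightarrow> nat \<Rightarrow> nat" where
  "cross_deg V A B E v = card {u \<in> V. crossing A B E v u}"

definition almost_regular :: "real \<Rightarrow> nat set \<Rightarrow> (nat \<Rightarrow> nat) \<Rightarrow> bool" where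
  "almost_regular K V d \<longleftrightarrow> real (Max (d ` V)) \<le> K * real (Min (d ` V))"

definition alt_paths :: "nat set \<Rightarrow> nat set \<Rightarrow> nat set \<Rightarrow> (nat \<Rightarrow> nat \<Rightarrow> bool) \<Rightarrow> nat \<Rightarrow> nat list set" where
  "alt_paths V A B E k = {p. length p = k + 1 \<and> distinct p \<and> set p \<subseteq> V \<and>
       (\<forall>i < k. crossing A B E (p ! i) (p ! Suc i))}"

definition induced_path :: "(nat \<Rightarrow> nat \<Rightarrow> bool) \<Rightarrow> nat list \<Rightarrow> bool" where
  "induced_path E p \<longleftrightarrow> (\<forall>i < length p. \<forall>j < length p. E (p ! i) (p ! j) \<longrightarrow> i = Suc j \<or> j = Suc i)"

end

theory Submission
  imports Defs
begin

(*
  Let \<Delta> and \<delta> be the maximum and minimum degree of the graph of crossing edges. As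
  e(A,B) <= n \<Delta>, the density hypothesis forces \<Delta> >= C (only e(A,B) >= C n is needed, and
  neither is the disjointness of A and B), and almost-regularity gives \<delta> >= \<Delta>/K.
  Extending walks vertex by vertex gives at least n (\<delta> - k)^k alternating paths of length k.
  A non-induced one has a chord between positions i and j >= i + 2. Once the alternating walk
  strictly between them is fixed, the chord is an edge of G between two neighbourhoods, i.e.
  between two sets of size at most \<Delta>; the Kovari-Sos-Turan double counting shows that a
  K_{s,s}-free graph has at most \<eta> \<Delta>^2 such edges once \<Delta> is large. The other vertices
  cost a factor \<Delta> each, so at most (k+1)^2 \<eta> n \<Delta>^k alternating paths are not induced.
  For \<eta> = \<epsilon> / ((k+1)^2 (2K)^k) and \<Delta> >= 2kK this is at most \<epsilon> n (\<Delta>/(2K))^k, hence at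
  most \<epsilon> n (\<delta> - k)^k.
*)

lemma card_eq_sum_card_fibres:
  assumes "finite T" "finite S" "f ` T \<subseteq> S"
  shows "card T = (\<Sum>y\<in>S. card {x\<in>T. f x = y})"
  using sum.group[OF assms, of "\<lambda>_. 1::nat"] by simp

lemma card_le_card_mult_fibre_bound:
  fixes c :: "'b::{semiring_1,ordered_comm_monoid_add}"
  assumes "finite T" "finite S" "f ` T \<subseteq> S" "\<And>y. y \<in> S \<Longrightarrow> of_nat (card {x\<in>T. f x = y}) \<le> c"
  shows "of_nat (card T) \<le> of_nat (card S) * c"
  unfolding card_eq_sum_card_fibres[OF assms(1-3)] of_nat_sum
  by (rule sum_bounded_above) (rule assms(4))

lemma card_mult_fibre_bound_le_card:
  assumes "finite T" "finite S" "f ` T \<subseteq> S" "\<And>y. y \<in> S \<Longrightarrow> c \<le> card {x\<in>T. f x = y}"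
  shows "card S * c \<le> card T"
  unfolding card_eq_sum_card_fibres[OF assms(1-3)]
  using sum_bounded_below[of S c] assms(4) by simp

lemma sum_le_card_ge_mult_plus:
  fixes f :: "'a \<Rightarrow> real" and D t :: real
  assumes "finite X" "\<And>x. x \<in> X \<Longrightarrow> f x \<le> D" "0 \<le> t"
  shows "(\<Sum>x\<in>X. f x) \<le> card {x\<in>X. t \<le> f x} * D + card X * t"
proof -
  let ?H = "{x\<in>X. t \<le> f x}"
  have "(\<Sum>x\<in>X. f x) = (\<Sum>x\<in>?H. f x) + (\<Sum>x\<in>X - ?H. f x)"
    using sum.subset_diff[of ?H X f] assms(1) by auto
  also have "(\<Sum>x\<in>?H. f x) \<le> card ?H * D"
    using sum_bounded_above[of ?H f D] assms(2) by auto
  also have "(\<Sum>x\<in>X - ?H. f x) \<le> card (X - ?H) * t"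
    using sum_bounded_above[of "X - ?H" f t] by force
  also have "\<dots> \<le> card X * t"
    using card_mono[OF assms(1), of "X - ?H"] assms(3) by (intro mult_right_mono) auto
  finally show ?thesis by simp
qed

section \<open>Edges between two vertex sets of a graph without K_{s,s}\<close>

lemma Kss_free_sum_choose_degree_le:
  assumes "finite X" "finite Y" "X \<subseteq> V" "Y \<subseteq> V" "\<forall>u. \<not> E u u" "\<not> contains_Kss V E s"
  shows "(\<Sum>x\<in>X. card {y\<in>Y. E x y} choose s) \<le> (s - 1) * (card Y choose s)"
proof -
  define Ts where "Ts = {T. T \<subseteq> Y \<and> card T = s}"
  have "finite Ts" using assms(2) unfolding Ts_def by simp
  have common_neighbours: "card {x\<in>X. T \<subseteq> {y\<in>Y. E x y}} \<le> s - 1" if "T \<in> Ts" for T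
  proof (rule ccontr)
    assume "\<not> ?thesis"
    then have "s \<le> card {x\<in>X. T \<subseteq> {y\<in>Y. E x y}}" by linarith
    then obtain S where S: "S \<subseteq> {x\<in>X. T \<subseteq> {y\<in>Y. E x y}}" "card S = s"
      by (rule obtain_subset_with_card_n)
    have "S \<inter> T = {}" "\<forall>x\<in>S. \<forall>y\<in>T. E x y" using S assms(5) by blast+
    moreover have "S \<subseteq> V" "T \<subseteq> V" "card T = s"
      using S that assms(3,4) unfolding Ts_def by auto
    ultimately have "contains_Kss V E s"
      unfolding contains_Kss_def using \<open>card S = s\<close> by blast
    with assms(6) show False by simp
  qed
  have "card {y\<in>Y. E x y} choose s = card {T\<in>Ts. T \<subseteq> {y\<in>Y. E x y}}" for x
  proof -
    have "{T\<in>Ts. T \<subseteq> {y\<in>Y. E x y}} = {T. T \<subseteq> {y\<in>Y. E x y} \<and> card T = s}"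
      unfolding Ts_def by blast
    then show ?thesis using assms(2) by (simp add: n_subsets)
  qed
  then have "(\<Sum>x\<in>X. card {y\<in>Y. E x y} choose s) = (\<Sum>x\<in>X. card {T\<in>Ts. T \<subseteq> {y\<in>Y. E x y}})"
    by simp
  also have "\<dots> = (\<Sum>T\<in>Ts. card {x\<in>X. T \<subseteq> {y\<in>Y. E x y}})"
    using sum.swap_restrict[OF assms(1) \<open>finite Ts\<close>, of "\<lambda>_ _. 1::nat"] by simp
  also have "\<dots> \<le> card Ts * (s - 1)"
    using sum_bounded_above[of Ts _ "s - 1"] common_neighbours by simp
  finally show ?thesis
    using assms(2) by (simp add: Ts_def n_subsets mult.commute)
qed

lemma Kss_free_card_high_degree_le:
  fixes t :: real
  assumes "finite X" "finite Y" "X \<subseteq> V" "Y \<subseteq> V" "\<forall>u. \<not> E u u" "\<not> contains_Kss V E s"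
    and "s \<ge> 1" "s \<le> t"
  shows "card {x\<in>X. t \<le> card {y\<in>Y. E x y}} * (t / s) ^ s \<le> real (s - 1) * card Y ^ s"
proof -
  let ?d = "\<lambda>x. card {y\<in>Y. E x y}"
  let ?H = "{x\<in>X. t \<le> ?d x}"
  have "(t / s) ^ s \<le> ?d x choose s" if "x \<in> ?H" for x
  proof -
    have "t \<le> ?d x" using that by simp
    then have "s \<le> ?d x" and "t / s \<le> ?d x / s" using \<open>s \<le> t\<close> by (auto simp: divide_right_mono)
    then have "(t / s) ^ s \<le> (?d x / s) ^ s"
      using \<open>s \<ge> 1\<close> \<open>s \<le> t\<close> by (intro power_mono) auto
    also have "\<dots> \<le> ?d x choose s" by (rule binomial_ge_n_over_k_pow_k) fact
    finally show ?thesis .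
  qed
  then have "card ?H * (t / s) ^ s \<le> (\<Sum>x\<in>?H. real (?d x choose s))"
    using sum_bounded_below[of ?H "(t / s) ^ s"] by simp
  also have "\<dots> \<le> (\<Sum>x\<in>X. real (?d x choose s))"
    using assms(1) by (intro sum_mono2) auto
  also have "\<dots> \<le> real (s - 1) * real (card Y choose s)"
    using Kss_free_sum_choose_degree_le[OF assms(1-6)]
    by (simp only: of_nat_sum[symmetric] of_nat_mult[symmetric] of_nat_le_iff)
  also have "\<dots> \<le> real (s - 1) * card Y ^ s"
  proof -
    have "card Y choose s \<le> card Y ^ s"
      by (cases "s \<le> card Y") (simp_all add: binomial_le_pow binomial_eq_0)
    then have "real (card Y choose s) \<le> real (card Y) ^ s" by (metis of_nat_le_iff of_nat_power)
    then show ?thesis by (intro mult_left_mono) auto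
  qed
  finally show ?thesis .
qed

text \<open>The first term of the threshold on D gives s <= \<eta> D / 2, which the binomial bound
  (t / s)^s <= (d choose s) needs; the second makes (\<eta> D / 2) (\<eta> D / (2 s))^s >= s D^s.\<close>

lemma Kss_free_cross_edges_le:
  fixes \<eta> D :: real
  assumes "finite X" "finite Y" "X \<subseteq> V" "Y \<subseteq> V" "\<forall>u. \<not> E u u" "\<not> contains_Kss V E s"
    and "s \<ge> 1" "\<eta> > 0" "card X \<le> D" "card Y \<le> D"
    and large: "2 * s / \<eta> + (2 * s / \<eta>) ^ (s + 1) \<le> D"
  shows "cross_edges X Y E \<le> \<eta> * D\<^sup>2"
proof (rule ccontr)
  assume dense: "\<not> ?thesis"
  define d where "d x = card {y\<in>Y. E x y}" for x
  define H where "H = {x\<in>X. \<eta> * D / 2 \<le> d x}"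
  have "0 < 2 * real s / \<eta>" "0 \<le> (2 * real s / \<eta>) ^ (s + 1)"
    using \<open>s \<ge> 1\<close> \<open>\<eta> > 0\<close> by simp_all
  then have "D > 0" and "2 * real s / \<eta> \<le> D" and power_le: "(2 * real s / \<eta>) ^ (s + 1) \<le> D"
    using large by linarith+
  then have s_le: "s \<le> \<eta> * D / 2" using \<open>\<eta> > 0\<close> by (simp add: field_simps)
  have d_le: "d x \<le> D" for x
  proof -
    have "d x \<le> card Y" unfolding d_def using assms(2) by (intro card_mono) auto
    then show ?thesis using assms(10) by linarith
  qed
  have "{(x, y). x \<in> X \<and> y \<in> Y \<and> E x y} = Sigma X (\<lambda>x. {y\<in>Y. E x y})" by auto
  then have "cross_edges X Y E = (\<Sum>x\<in>X. real (d x))"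
    unfolding cross_edges_def d_def using assms(1,2) by simp
  also have "\<dots> \<le> card H * D + card X * (\<eta> * D / 2)"
    unfolding H_def using d_le \<open>\<eta> > 0\<close> \<open>D > 0\<close> by (intro sum_le_card_ge_mult_plus[OF assms(1)]) auto
  also have "\<dots> \<le> card H * D + D * (\<eta> * D / 2)"
    using assms(9) \<open>\<eta> > 0\<close> \<open>D > 0\<close> by (intro add_left_mono mult_right_mono) auto
  finally have "D * (\<eta> * D / 2) < D * card H"
    using dense by (simp add: power2_eq_square algebra_simps)
  then have "\<eta> * D / 2 < card H" using \<open>D > 0\<close> by simp
  have "s * D ^ s \<le> s * D ^ s * (D * (\<eta> / (2 * real s)) ^ (s + 1))"
    using power_le \<open>\<eta> > 0\<close> \<open>s \<ge> 1\<close> \<open>D > 0\<close> by (simp add: power_divide field_simps)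
  also have "\<dots> = \<eta> * D / 2 * (\<eta> * D / 2 / s) ^ s"
    using \<open>s \<ge> 1\<close> by (simp add: power_divide power_mult_distrib field_simps)
  also have "\<dots> < card H * (\<eta> * D / 2 / s) ^ s"
    using \<open>\<eta> * D / 2 < card H\<close> \<open>\<eta> > 0\<close> \<open>D > 0\<close> \<open>s \<ge> 1\<close> by simp
  also have "\<dots> \<le> real (s - 1) * card Y ^ s"
    using Kss_free_card_high_degree_le[OF assms(1-7) s_le] unfolding H_def d_def .
  also have "\<dots> \<le> real (s - 1) * D ^ s"
    using power_mono[OF assms(10), of s] by (intro mult_left_mono) auto
  finally show False
    using \<open>s \<ge> 1\<close> \<open>D > 0\<close> by (simp add: of_nat_diff left_diff_distrib)
qed

section \<open>Counting walks\<close>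

definition walks :: "'a set \<Rightarrow> ('a \<Rightarrow> 'a \<Rightarrow> bool) \<Rightarrow> nat \<Rightarrow> 'a list set" where
  "walks V R m = {p. length p = m \<and> set p \<subseteq> V \<and> successively R p}"

definition neighbours :: "'a set \<Rightarrow> ('a \<Rightarrow> 'a \<Rightarrow> bool) \<Rightarrow> 'a \<Rightarrow> 'a set" where
  "neighbours V R v = {u \<in> V. R v u}"

definition chorded_walks ::
    "'a set \<Rightarrow> ('a \<Rightarrow> 'a \<Rightarrow> bool) \<Rightarrow> ('a \<Rightarrow> 'a \<Rightarrow> bool) \<Rightarrow> nat \<Rightarrow> nat \<Rightarrow> nat \<Rightarrow> 'a list set" where
  "chorded_walks V R E m i j = {p \<in> walks V R m. E (p ! i) (p ! j)}"

lemma finite_walks: "finite V \<Longrightarrow> finite (walks V R m)"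
  unfolding walks_def
  by (rule finite_subset[OF _ finite_lists_length_eq[of V m]]) auto

lemma finite_chorded_walks: "finite V \<Longrightarrow> finite (chorded_walks V R E m i j)"
  unfolding chorded_walks_def by (simp add: finite_walks)

lemma walks_Suc_0: "walks V R (Suc 0) = (\<lambda>x. [x]) ` V"
  unfolding walks_def by (auto simp: length_Suc_conv)

lemma card_walks_Suc_0: "card (walks V R (Suc 0)) = card V"
  unfolding walks_Suc_0 by (simp add: card_image inj_on_def)

lemma snoc_in_walks:
  "q \<noteq> [] \<Longrightarrow> q @ [x] \<in> walks V R (Suc m) \<longleftrightarrow> q \<in> walks V R m \<and> x \<in> V \<and> R (last q) x"
  unfolding walks_def by (auto simp: successively_append_iff)

lemma rev_in_walks:
  assumes "symp R"
  shows "rev p \<in> walks V R m \<longleftrightarrow> p \<in> walks V R m"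
proof -
  have converse: "(\<lambda>x y. R y x) = R" using assms by (auto intro!: ext dest: sympD)
  show ?thesis by (simp only: walks_def mem_Collect_eq set_rev length_rev successively_rev converse)
qed

lemma butlast_in_walks:
  assumes "p \<in> walks V R (Suc m)"
  shows "butlast p \<in> walks V R m"
proof -
  have "p \<noteq> []" using assms by (auto simp: walks_def)
  then have "successively R (butlast p @ [last p])" using assms by (simp add: walks_def)
  then show ?thesis
    using assms by (auto simp: walks_def successively_append_iff dest: in_set_butlastD)
qed

lemma card_le_card_butlast_image_mult:
  assumes "finite V" "\<forall>v\<in>V. card (neighbours V R v) \<le> \<Delta>" "T \<subseteq> walks V R (Suc (Suc m))"
  shows "card T \<le> card (butlast ` T) * \<Delta>"
proof -
  have "finite T" using assms(1,3) finite_walks finite_subset by blast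
  have "card {p\<in>T. butlast p = q} \<le> \<Delta>" if "q \<in> butlast ` T" for q
  proof -
    have q: "q \<in> walks V R (Suc m)" using that assms(3) butlast_in_walks by blast
    then have "q \<noteq> []" by (auto simp: walks_def)
    with q have "last q \<in> V" by (auto simp: walks_def)
    have "{p\<in>T. butlast p = q} \<subseteq> (\<lambda>x. q @ [x]) ` neighbours V R (last q)"
    proof
      fix p assume p: "p \<in> {p\<in>T. butlast p = q}"
      then have "p \<in> walks V R (Suc (Suc m))" "butlast p = q" using assms(3) by auto
      then have p_eq: "q @ [last p] = p"
        using append_butlast_last_id[of p] \<open>q \<noteq> []\<close> by (cases "p = []") auto
      with \<open>p \<in> walks V R (Suc (Suc m))\<close> have "q @ [last p] \<in> walks V R (Suc (Suc m))" by simp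
      then have "last p \<in> neighbours V R (last q)"
        using \<open>q \<noteq> []\<close> by (simp add: snoc_in_walks neighbours_def)
      with p_eq[symmetric] show "p \<in> (\<lambda>x. q @ [x]) ` neighbours V R (last q)" by (rule image_eqI)
    qed
    then have "card {p\<in>T. butlast p = q} \<le> card (neighbours V R (last q))"
      using assms(1) by (intro surj_card_le) (auto simp: neighbours_def)
    then show ?thesis using assms(2) \<open>last q \<in> V\<close> by (meson le_trans)
  qed
  then show ?thesis
    using card_le_card_mult_fibre_bound[where f = butlast and c = \<Delta>, OF \<open>finite T\<close>
        finite_imageI[OF \<open>finite T\<close>] subset_refl]
    by simp
qed

lemma card_walks_le:
  assumes "finite V" "\<forall>v\<in>V. card (neighbours V R v) \<le> \<Delta>"
  shows "card (walks V R (Suc m)) \<le> card V * \<Delta> ^ m"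
proof (induction m)
  case 0
  show ?case by (simp add: card_walks_Suc_0)
next
  case (Suc m)
  have "card (walks V R (Suc (Suc m))) \<le> card (butlast ` walks V R (Suc (Suc m))) * \<Delta>"
    by (rule card_le_card_butlast_image_mult[OF assms subset_refl])
  also have "\<dots> \<le> card (walks V R (Suc m)) * \<Delta>"
    using butlast_in_walks finite_walks[OF assms(1)] by (intro mult_right_mono card_mono) auto
  also have "\<dots> \<le> card V * \<Delta> ^ Suc m"
    using Suc.IH by (simp add: mult.assoc mult.commute[of \<Delta>])
  finally show ?case .
qed

lemma card_distinct_walks_ge:
  assumes "finite V" "\<forall>v\<in>V. \<delta> \<le> card (neighbours V R v)"
  shows "m \<le> k \<Longrightarrow> card V * (\<delta> - k) ^ m \<le> card {p \<in> walks V R (Suc m). distinct p}"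
proof (induction m)
  case 0
  have "{p \<in> walks V R (Suc 0). distinct p} = walks V R (Suc 0)"
    by (auto simp: walks_Suc_0)
  then show ?case by (simp add: card_walks_Suc_0)
next
  case (Suc m)
  let ?S = "{p \<in> walks V R (Suc m). distinct p}"
  let ?T = "{p \<in> walks V R (Suc (Suc m)). distinct p}"
  have extend: "card ?S * (\<delta> - k) \<le> card ?T"
  proof (rule card_mult_fibre_bound_le_card[where f = butlast])
    show "finite ?T" "finite ?S" using finite_walks[OF assms(1)] by auto
    show "butlast ` ?T \<subseteq> ?S" using butlast_in_walks by (auto simp: distinct_butlast)
    fix q assume q: "q \<in> ?S"
    then have "q \<noteq> []" "length q = Suc m" by (auto simp: walks_def)
    with q have "last q \<in> V" by (auto simp: walks_def)
    have "(\<lambda>x. q @ [x]) ` (neighbours V R (last q) - set q) \<subseteq> {p \<in> ?T. butlast p = q}"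
      using q \<open>q \<noteq> []\<close> by (auto simp: snoc_in_walks neighbours_def)
    then have "card ((\<lambda>x. q @ [x]) ` (neighbours V R (last q) - set q))
        \<le> card {p \<in> ?T. butlast p = q}"
      using finite_walks[OF assms(1)] by (intro card_mono) auto
    then have "card (neighbours V R (last q) - set q) \<le> card {p \<in> ?T. butlast p = q}"
      by (simp add: card_image inj_on_def)
    moreover have "card (neighbours V R (last q)) - card (set q)
        \<le> card (neighbours V R (last q) - set q)"
      by (rule diff_card_le_card_Diff) simp
    moreover have "card (set q) \<le> k" using card_length[of q] \<open>length q = Suc m\<close> Suc.prems by simp
    ultimately show "\<delta> - k \<le> card {p \<in> ?T. butlast p = q}"
      using assms(2) \<open>last q \<in> V\<close> by fastforce
  qed
  have "card V * (\<delta> - k) ^ Suc m = card V * (\<delta> - k) ^ m * (\<delta> - k)" by simp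
  also have "\<dots> \<le> card ?S * (\<delta> - k)"
    using Suc.IH Suc.prems by (intro mult_right_mono) auto
  finally show ?case using extend by linarith
qed

lemma tl_in_walks: "p \<in> walks V R (Suc m) \<Longrightarrow> tl p \<in> walks V R m"
  by (cases p) (auto simp: walks_def successively_Cons)

lemma Cons_snoc_in_walks:
  "q \<noteq> [] \<Longrightarrow> x # q @ [y] \<in> walks V R (Suc (Suc m)) \<longleftrightarrow>
     q \<in> walks V R m \<and> x \<in> V \<and> y \<in> V \<and> R x (hd q) \<and> R (last q) y"
  unfolding walks_def by (auto simp: successively_Cons successively_append_iff)

lemma butlast_in_chorded_walks:
  assumes "p \<in> chorded_walks V R E (Suc m) i j" "i < m" "j < m"
  shows "butlast p \<in> chorded_walks V R E m i j"
  using assms butlast_in_walks[of p V R m] unfolding chorded_walks_def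
  by (auto simp: walks_def nth_butlast)

lemma rev_in_chorded_walks:
  assumes "symp R" "symp E"
    and "p \<in> chorded_walks V R E m i j" "i < m" "j < m"
  shows "rev p \<in> chorded_walks V R E m (m - 1 - j) (m - 1 - i)"
proof -
  have "length p = m" using assms(3) by (simp add: chorded_walks_def walks_def)
  then show ?thesis
    using assms by (auto simp: chorded_walks_def rev_in_walks rev_nth dest: sympD)
qed

lemma card_chorded_walks_rev:
  assumes "symp R" "symp E" "i < m" "j < m"
  shows "card (chorded_walks V R E m (m - 1 - j) (m - 1 - i)) = card (chorded_walks V R E m i j)"
proof -
  have "bij_betw rev (chorded_walks V R E m i j) (chorded_walks V R E m (m - 1 - j) (m - 1 - i))"
  proof (rule bij_betw_byWitness[where f' = rev])
    show "rev ` chorded_walks V R E m i j \<subseteq> chorded_walks V R E m (m - 1 - j) (m - 1 - i)"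
      using rev_in_chorded_walks[OF assms(1,2)] assms(3,4) by blast
    have "rev p \<in> chorded_walks V R E m i j"
      if "p \<in> chorded_walks V R E m (m - 1 - j) (m - 1 - i)" for p
      using rev_in_chorded_walks[OF assms(1,2) that] assms(3,4) by simp
    then show "rev ` chorded_walks V R E m (m - 1 - j) (m - 1 - i) \<subseteq> chorded_walks V R E m i j"
      by blast
  qed simp_all
  then show ?thesis by (simp add: bij_betw_same_card)
qed

lemma card_chorded_walks_Suc_le:
  assumes "finite V" "\<forall>v\<in>V. card (neighbours V R v) \<le> \<Delta>" "i < m" "j < m"
  shows "card (chorded_walks V R E (Suc m) i j) \<le> card (chorded_walks V R E m i j) * \<Delta>"
proof -
  obtain m' where m': "m = Suc m'" using assms(3) by (cases m) auto
  have "card (chorded_walks V R E (Suc m) i j)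
      \<le> card (butlast ` chorded_walks V R E (Suc m) i j) * \<Delta>"
    using card_le_card_butlast_image_mult[OF assms(1,2), of "chorded_walks V R E (Suc m) i j" m'] m'
    by (simp add: chorded_walks_def)
  also have "\<dots> \<le> card (chorded_walks V R E m i j) * \<Delta>"
    using butlast_in_chorded_walks[OF _ assms(3,4)] finite_chorded_walks[OF assms(1)]
    by (intro mult_right_mono card_mono) auto
  finally show ?thesis .
qed

lemma Cons_snoc_butlast_tl: "length p = Suc (Suc m) \<Longrightarrow> hd p # butlast (tl p) @ [last p] = p"
  by (cases p) (auto simp: append_butlast_last_id)

lemma card_chorded_walks_ends_le:
  fixes Pb :: real
  assumes "finite V" "symp R" "m > 0"
    and pairs: "\<forall>u\<in>V. \<forall>v\<in>V.
      real (card {(x, y). x \<in> neighbours V R u \<and> y \<in> neighbours V R v \<and> E x y}) \<le> Pb"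
  shows "real (card (chorded_walks V R E (Suc (Suc m)) 0 (Suc m))) \<le> real (card (walks V R m)) * Pb"
proof (rule card_le_card_mult_fibre_bound[where f = "\<lambda>p. butlast (tl p)"])
  show "finite (chorded_walks V R E (Suc (Suc m)) 0 (Suc m))" "finite (walks V R m)"
    using assms(1) by (simp_all add: finite_chorded_walks finite_walks)
  show "(\<lambda>p. butlast (tl p)) ` chorded_walks V R E (Suc (Suc m)) 0 (Suc m) \<subseteq> walks V R m"
    using tl_in_walks butlast_in_walks by (fastforce simp: chorded_walks_def)
  fix q assume q: "q \<in> walks V R m"
  then have "q \<noteq> []" using \<open>m > 0\<close> by (auto simp: walks_def)
  with q have "hd q \<in> V" "last q \<in> V" by (auto simp: walks_def)
  define P where "P = {(x, y). x \<in> neighbours V R (hd q) \<and> y \<in> neighbours V R (last q) \<and> E x y}"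
  have "{p \<in> chorded_walks V R E (Suc (Suc m)) 0 (Suc m). butlast (tl p) = q} \<subseteq>
      (\<lambda>(x, y). x # q @ [y]) ` P"
  proof
    fix p assume p: "p \<in> {p \<in> chorded_walks V R E (Suc (Suc m)) 0 (Suc m). butlast (tl p) = q}"
    then have "length p = Suc (Suc m)" by (simp add: chorded_walks_def walks_def)
    then have p_eq: "hd p # q @ [last p] = p" using p Cons_snoc_butlast_tl by fastforce
    then have "hd p # q @ [last p] \<in> walks V R (Suc (Suc m))" "E (p ! 0) (p ! Suc m)"
      using p by (auto simp: chorded_walks_def)
    moreover have "p \<noteq> []" using \<open>length p = Suc (Suc m)\<close> by auto
    then have "p ! 0 = hd p" "p ! Suc m = last p"
      using \<open>length p = Suc (Suc m)\<close> by (simp_all add: hd_conv_nth last_conv_nth)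
    ultimately have "(hd p, last p) \<in> P"
      using \<open>q \<noteq> []\<close> assms(2) by (auto simp: P_def neighbours_def Cons_snoc_in_walks dest: sympD)
    with p_eq show "p \<in> (\<lambda>(x, y). x # q @ [y]) ` P"
      by (intro image_eqI[where x = "(hd p, last p)"]) simp_all
  qed
  moreover have "finite P"
    using assms(1) finite_subset[of P "V \<times> V"] by (auto simp: P_def neighbours_def)
  ultimately have "card {p \<in> chorded_walks V R E (Suc (Suc m)) 0 (Suc m). butlast (tl p) = q}
      \<le> card P"
    by (rule surj_card_le[rotated])
  also have "real (card P) \<le> Pb" using pairs \<open>hd q \<in> V\<close> \<open>last q \<in> V\<close> unfolding P_def by blast
  finally show
    "real (card {p \<in> chorded_walks V R E (Suc (Suc m)) 0 (Suc m). butlast (tl p) = q}) \<le> Pb"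
    by simp
qed

lemma card_chorded_walks_ends_le_power:
  fixes Pb :: real
  assumes "finite V" "symp R" "symp E" "\<forall>v\<in>V. card (neighbours V R v) \<le> \<Delta>" "0 \<le> Pb"
    and pairs: "\<forall>u\<in>V. \<forall>v\<in>V.
      real (card {(x, y). x \<in> neighbours V R u \<and> y \<in> neighbours V R v \<and> E x y}) \<le> Pb"
  shows "real (card (chorded_walks V R E (Suc (Suc (Suc l))) 0 (Suc (Suc l))))
    \<le> real (card V) * real \<Delta> ^ l * Pb"
proof -
  have "real (card (chorded_walks V R E (Suc (Suc (Suc l))) 0 (Suc (Suc l))))
      \<le> real (card (walks V R (Suc l))) * Pb"
    using card_chorded_walks_ends_le[OF assms(1,2) _ pairs] by simp
  also have "\<dots> \<le> real (card V * \<Delta> ^ l) * Pb"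
    using card_walks_le[OF assms(1,4), of l] assms(5)
    by (intro mult_right_mono) (simp_all only: of_nat_le_iff)
  finally show ?thesis by simp
qed

lemma card_chorded_walks_le:
  fixes Pb :: real
  assumes "finite V" "symp R" "symp E" "\<forall>v\<in>V. card (neighbours V R v) \<le> \<Delta>" "0 \<le> Pb"
    and pairs: "\<forall>u\<in>V. \<forall>v\<in>V.
      real (card {(x, y). x \<in> neighbours V R u \<and> y \<in> neighbours V R v \<and> E x y}) \<le> Pb"
  shows "i + 2 \<le> j \<Longrightarrow> j < m \<Longrightarrow>
    real (card (chorded_walks V R E m i j)) \<le> real (card V) * real \<Delta> ^ (m - 3) * Pb"
proof (induction m arbitrary: i j)
  case 0
  then show ?case by simp
next
  case (Suc m)
  txt \<open>A vertex beyond the chord is removed from the end of the walk, after reversing the walk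
    if the chord ends there, at the cost of a factor \<Delta>. A chord joining the two ends is an
    E-edge between the neighbourhoods of the ends of the interior walk.\<close>
  have shorten:
    "real (card (chorded_walks V R E (Suc m) i' j')) \<le> real (card V) * real \<Delta> ^ (Suc m - 3) * Pb"
    if "i' + 2 \<le> j'" "j' < m" for i' j'
  proof -
    have "card (chorded_walks V R E (Suc m) i' j') \<le> card (chorded_walks V R E m i' j') * \<Delta>"
      using that by (intro card_chorded_walks_Suc_le[OF assms(1,4)]) auto
    then have "real (card (chorded_walks V R E (Suc m) i' j'))
        \<le> real (card (chorded_walks V R E m i' j')) * real \<Delta>"
      by (metis of_nat_le_iff of_nat_mult)
    also have "\<dots> \<le> real (card V) * real \<Delta> ^ (m - 3) * Pb * real \<Delta>"
      using Suc.IH[OF that] by (intro mult_right_mono) auto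
    also have "\<dots> = real (card V) * real \<Delta> ^ (Suc m - 3) * Pb"
    proof -
      have "Suc m - 3 = Suc (m - 3)" using that by simp
      then show ?thesis by (simp add: mult_ac)
    qed
    finally show ?thesis .
  qed
  consider "j < m" | "j = m" "0 < i" | "j = m" "i = 0" using Suc.prems by linarith
  then show ?case
  proof cases
    case 1
    then show ?thesis using shorten Suc.prems(1) by blast
  next
    case 2
    have "card (chorded_walks V R E (Suc m) i j) = card (chorded_walks V R E (Suc m) 0 (m - i))"
      using card_chorded_walks_rev[OF assms(2,3), of i "Suc m" j V] Suc.prems 2 by simp
    moreover have "real (card (chorded_walks V R E (Suc m) 0 (m - i)))
        \<le> real (card V) * real \<Delta> ^ (Suc m - 3) * Pb"
      using Suc.prems 2 by (intro shorten) auto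
    ultimately show ?thesis by simp
  next
    case 3
    then have "2 \<le> m" using Suc.prems by simp
    then obtain l where "m = Suc (Suc l)" by (metis add_2_eq_Suc le_add_diff_inverse)
    then show ?thesis
      using card_chorded_walks_ends_le_power[OF assms, of l] 3 by simp
  qed
qed

section \<open>Alternating paths\<close>

lemma simple_graph_symp: "simple_graph V E \<Longrightarrow> symp E"
  unfolding simple_graph_def by (auto intro: sympI)

lemma symp_crossing: "symp E \<Longrightarrow> symp (crossing A B E)"
  unfolding crossing_def by (auto intro!: sympI dest: sympD)

lemma cross_deg_eq_card_neighbours: "cross_deg V A B E v = card (neighbours V (crossing A B E) v)"
  by (simp add: cross_deg_def neighbours_def)

lemma alt_paths_eq_distinct_walks:
  "alt_paths V A B E k = {p \<in> walks V (crossing A B E) (Suc k). distinct p}"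
  unfolding alt_paths_def walks_def successively_conv_nth by auto

lemma chord_if_not_induced_path:
  assumes "symp E" "\<forall>u. \<not> E u u" "\<not> induced_path E p"
  obtains i j where "i + 2 \<le> j" "j < length p" "E (p ! i) (p ! j)"
proof -
  obtain i j where ij: "i < length p" "j < length p" "E (p ! i) (p ! j)" "i \<noteq> Suc j" "j \<noteq> Suc i"
    using assms(3) unfolding induced_path_def by blast
  then have "i \<noteq> j" using assms(2) by auto
  show thesis
  proof (cases "i < j")
    case True
    then show thesis using ij by (intro that[of i j]) auto
  next
    case False
    then show thesis using ij \<open>i \<noteq> j\<close> assms(1) by (intro that[of j i]) (auto dest: sympD)
  qed
qed

lemma card_alt_paths_ge:
  assumes "simple_graph V E" "\<forall>v\<in>V. \<delta> \<le> cross_deg V A B E v"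
  shows "card V * (\<delta> - k) ^ k \<le> card (alt_paths V A B E k)"
  using card_distinct_walks_ge[where R = "crossing A B E" and m = k and k = k] assms
  by (simp add: simple_graph_def alt_paths_eq_distinct_walks cross_deg_eq_card_neighbours)

lemma non_induced_alt_paths_subset_chorded_walks:
  assumes "simple_graph V E"
  shows "{p \<in> alt_paths V A B E k. \<not> induced_path E p}
    \<subseteq> (\<Union>ij\<in>{(i, j). i + 2 \<le> j \<and> j \<le> k}.
          chorded_walks V (crossing A B E) E (Suc k) (fst ij) (snd ij))"
proof
  fix p assume p: "p \<in> {p \<in> alt_paths V A B E k. \<not> induced_path E p}"
  then have "p \<in> walks V (crossing A B E) (Suc k)" "length p = Suc k"
    by (auto simp: alt_paths_eq_distinct_walks walks_def)
  moreover obtain i j where "i + 2 \<le> j" "j < length p" "E (p ! i) (p ! j)"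
    using chord_if_not_induced_path[OF simple_graph_symp[OF assms]] p assms
    by (auto simp: simple_graph_def)
  ultimately show "p \<in> (\<Union>ij\<in>{(i, j). i + 2 \<le> j \<and> j \<le> k}.
      chorded_walks V (crossing A B E) E (Suc k) (fst ij) (snd ij))"
    by (intro UN_I[of "(i, j)"]) (auto simp: chorded_walks_def)
qed

lemma card_non_induced_alt_paths_le:
  fixes Pb :: real
  assumes "simple_graph V E" "\<forall>v\<in>V. cross_deg V A B E v \<le> \<Delta>" "0 \<le> Pb"
    and pairs: "\<And>X Y. X \<subseteq> V \<Longrightarrow> Y \<subseteq> V \<Longrightarrow> card X \<le> \<Delta> \<Longrightarrow> card Y \<le> \<Delta> \<Longrightarrow>
      real (cross_edges X Y E) \<le> Pb"
  shows "real (card {p \<in> alt_paths V A B E k. \<not> induced_path E p})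
    \<le> (real k + 1)\<^sup>2 * (real (card V) * real \<Delta> ^ (k - 2) * Pb)"
proof -
  let ?R = "crossing A B E"
  define I where "I = {(i, j). i + 2 \<le> j \<and> j \<le> k}"
  define W where "W ij = chorded_walks V ?R E (Suc k) (fst ij) (snd ij)" for ij
  have "finite V" "symp E" using assms(1) simple_graph_symp by (auto simp: simple_graph_def)
  have "I \<subseteq> {0..k} \<times> {0..k}" unfolding I_def by auto
  then have "finite I" and card_I: "card I \<le> (k + 1)\<^sup>2"
    using card_mono[of "{0..k} \<times> {0..k}" I] finite_subset by (auto simp: power2_eq_square)
  have "\<forall>u\<in>V. \<forall>v\<in>V.
      real (card {(x, y). x \<in> neighbours V ?R u \<and> y \<in> neighbours V ?R v \<and> E x y}) \<le> Pb"
  proof (intro ballI)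
    fix u v assume "u \<in> V" "v \<in> V"
    then show "real (card {(x, y). x \<in> neighbours V ?R u \<and> y \<in> neighbours V ?R v \<and> E x y}) \<le> Pb"
      using pairs[of "neighbours V ?R u" "neighbours V ?R v"] assms(2)
      unfolding cross_edges_def cross_deg_eq_card_neighbours by (auto simp: neighbours_def)
  qed
  note chorded_bound = card_chorded_walks_le[OF \<open>finite V\<close> symp_crossing[OF \<open>symp E\<close>] \<open>symp E\<close> _
      assms(3) this]
  have "card {p \<in> alt_paths V A B E k. \<not> induced_path E p} \<le> card (\<Union>ij\<in>I. W ij)"
    using non_induced_alt_paths_subset_chorded_walks[OF assms(1)] \<open>finite I\<close> \<open>finite V\<close>
    unfolding I_def W_def by (intro card_mono) (auto simp: finite_chorded_walks)
  also have "\<dots> \<le> (\<Sum>ij\<in>I. card (W ij))" by (rule card_UN_le[OF \<open>finite I\<close>])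
  also have "real (\<Sum>ij\<in>I. card (W ij)) \<le> card I * (real (card V) * real \<Delta> ^ (k - 2) * Pb)"
  proof -
    have "real (card (W (i, j))) \<le> real (card V) * real \<Delta> ^ (k - 2) * Pb" if "(i, j) \<in> I" for i j
      using chorded_bound[of \<Delta> i j "Suc k"] that assms(2)
      by (simp add: I_def W_def cross_deg_eq_card_neighbours)
    then show ?thesis
      using sum_bounded_above[of I "\<lambda>ij. real (card (W ij))"] by (force simp: of_nat_sum)
  qed
  also have "\<dots> \<le> (k + 1)\<^sup>2 * (real (card V) * real \<Delta> ^ (k - 2) * Pb)"
    using card_I assms(3) by (intro mult_right_mono) (simp_all flip: of_nat_power)
  finally show ?thesis by (simp add: add.commute)
qed

lemma non_induced_alt_paths_fraction_le:
  fixes K \<epsilon> :: real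
  assumes "simple_graph V E" "k \<ge> 2" "K > 0" "\<epsilon> > 0"
    and deg: "\<forall>v\<in>V. \<delta> \<le> cross_deg V A B E v \<and> cross_deg V A B E v \<le> \<Delta>"
    and regular: "\<Delta> / (2 * K) \<le> real \<delta> - real k"
    and pairs: "\<And>X Y. X \<subseteq> V \<Longrightarrow> Y \<subseteq> V \<Longrightarrow> card X \<le> \<Delta> \<Longrightarrow> card Y \<le> \<Delta> \<Longrightarrow>
      real (cross_edges X Y E) \<le> \<epsilon> / ((real k + 1)\<^sup>2 * (2 * K) ^ k) * real \<Delta> ^ 2"
  shows "card {p \<in> alt_paths V A B E k. \<not> induced_path E p} \<le> \<epsilon> * card (alt_paths V A B E k)"
proof -
  have "card {p \<in> alt_paths V A B E k. \<not> induced_path E p}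
      \<le> (real k + 1)\<^sup>2 *
        (card V * real \<Delta> ^ (k - 2) * (\<epsilon> / ((real k + 1)\<^sup>2 * (2 * K) ^ k) * real \<Delta> ^ 2))"
    using deg \<open>K > 0\<close> \<open>\<epsilon> > 0\<close> by (intro card_non_induced_alt_paths_le[OF assms(1) _ _ pairs]) auto
  also have "\<dots> = \<epsilon> * (card V * (\<Delta> / (2 * K)) ^ k)"
  proof -
    have "real \<Delta> ^ (k - 2) * real \<Delta> ^ 2 = real \<Delta> ^ k"
      by (simp only: power_add[symmetric] le_add_diff_inverse2[OF \<open>k \<ge> 2\<close>])
    then show ?thesis using \<open>K > 0\<close> by (simp add: power_divide field_simps)
  qed
  also have "\<dots> \<le> \<epsilon> * (card V * (real \<delta> - real k) ^ k)"
    using regular \<open>K > 0\<close> \<open>\<epsilon> > 0\<close> by (intro mult_left_mono power_mono) auto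
  also have "\<dots> \<le> \<epsilon> * card (alt_paths V A B E k)"
  proof -
    have "0 \<le> \<Delta> / (2 * K)" using \<open>K > 0\<close> by simp
    then have "k \<le> \<delta>" using regular by linarith
    then have "card V * (real \<delta> - real k) ^ k = real (card V * (\<delta> - k) ^ k)"
      by (simp add: of_nat_diff)
    also have "\<dots> \<le> card (alt_paths V A B E k)"
      using card_alt_paths_ge[OF assms(1), of \<delta> A B k] deg by (simp only: of_nat_le_iff) blast
    finally show ?thesis using \<open>\<epsilon> > 0\<close> by simp
  qed
  finally show ?thesis .
qed

lemma cross_edges_le_card_mult_Max_cross_deg:
  assumes "simple_graph V E" "A \<subseteq> V"
  shows "cross_edges A B E \<le> card V * Max (cross_deg V A B E ` V)"
proof -
  have "finite V" "finite A" using assms finite_subset by (auto simp: simple_graph_def)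
  have "{(a, b). a \<in> A \<and> b \<in> B \<and> E a b} \<subseteq> Sigma A (neighbours V (crossing A B E))"
    using assms unfolding simple_graph_def neighbours_def crossing_def by blast
  then have "cross_edges A B E \<le> (\<Sum>a\<in>A. cross_deg V A B E a)"
    unfolding cross_edges_def cross_deg_eq_card_neighbours
    using card_mono[of "Sigma A (neighbours V (crossing A B E))"] \<open>finite V\<close> \<open>finite A\<close>
    by (simp add: neighbours_def)
  also have "\<dots> \<le> card A * Max (cross_deg V A B E ` V)"
  proof -
    have "cross_deg V A B E a \<le> Max (cross_deg V A B E ` V)" if "a \<in> A" for a
      using that assms(2) \<open>finite V\<close> by (intro Max_ge) auto
    then show ?thesis using sum_bounded_above[of A "cross_deg V A B E"] by simp
  qed
  also have "\<dots> \<le> card V * Max (cross_deg V A B E ` V)"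
    using card_mono[OF \<open>finite V\<close> assms(2)] by simp
  finally show ?thesis .
qed

lemma induced_alt_paths_ge:
  fixes k s :: nat and K \<epsilon> :: real
  defines "\<eta> \<equiv> \<epsilon> / ((real k + 1)\<^sup>2 * (2 * K) ^ k)"
  assumes "simple_graph V E" "\<not> contains_Kss V E s" "k \<ge> 2" "s \<ge> 1" "K > 0" "\<epsilon> > 0" "V \<noteq> {}"
    and regular: "almost_regular K V (cross_deg V A B E)"
    and large: "2 * real s / \<eta> + (2 * real s / \<eta>) ^ (s + 1) + 2 * real k * K
      \<le> Max (cross_deg V A B E ` V)"
  shows "(1 - \<epsilon>) * card (alt_paths V A B E k) \<le> card {p \<in> alt_paths V A B E k. induced_path E p}"
proof -
  define \<Delta> where "\<Delta> = Max (cross_deg V A B E ` V)"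
  define \<delta> where "\<delta> = Min (cross_deg V A B E ` V)"
  have "finite V" using assms(2) by (simp add: simple_graph_def)
  have "\<eta> > 0" unfolding \<eta>_def using \<open>K > 0\<close> \<open>\<epsilon> > 0\<close> by simp
  then have "0 \<le> 2 * real s / \<eta>" "0 \<le> (2 * real s / \<eta>) ^ (s + 1)" "0 \<le> 2 * real k * K"
    using \<open>K > 0\<close> by simp_all
  then have threshold: "2 * real s / \<eta> + (2 * real s / \<eta>) ^ (s + 1) \<le> \<Delta>" and "2 * real k * K \<le> \<Delta>"
    using large unfolding \<Delta>_def by linarith+
  have pairs: "real (cross_edges X Y E) \<le> \<eta> * real \<Delta> ^ 2"
    if "X \<subseteq> V" "Y \<subseteq> V" "card X \<le> \<Delta>" "card Y \<le> \<Delta>" for X Y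
    by (rule Kss_free_cross_edges_le[OF _ _ that(1,2) _ assms(3) _ _ _ _ threshold])
      (use that assms(2) \<open>finite V\<close> \<open>\<eta> > 0\<close> \<open>s \<ge> 1\<close> in
        \<open>auto simp: simple_graph_def intro: finite_subset\<close>)
  have almost_regular: "\<Delta> / (2 * K) \<le> real \<delta> - real k"
  proof -
    have "\<Delta> \<le> K * \<delta>" using regular unfolding almost_regular_def \<Delta>_def \<delta>_def .
    then show ?thesis using \<open>2 * real k * K \<le> \<Delta>\<close> \<open>K > 0\<close> by (simp add: field_simps)
  qed
  have "\<forall>v\<in>V. \<delta> \<le> cross_deg V A B E v \<and> cross_deg V A B E v \<le> \<Delta>"
    using \<open>finite V\<close> unfolding \<Delta>_def \<delta>_def by simp
  from non_induced_alt_paths_fraction_le[OF assms(2,4,6,7) this almost_regular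
      pairs[unfolded \<eta>_def]]
  have "card {p \<in> alt_paths V A B E k. \<not> induced_path E p} \<le> \<epsilon> * card (alt_paths V A B E k)" .
  moreover have "card (alt_paths V A B E k)
      = card {p \<in> alt_paths V A B E k. induced_path E p}
        + card {p \<in> alt_paths V A B E k. \<not> induced_path E p}"
    using finite_walks[of V] assms(2)
    by (subst card_Un_disjoint[symmetric])
      (auto simp: simple_graph_def alt_paths_eq_distinct_walks intro: arg_cong[where f = card])
  ultimately show ?thesis by (simp add: algebra_simps)
qed

theorem lemma4p7:
  fixes k s :: nat and K \<epsilon> :: real
  assumes "k \<ge> 2" and "s \<ge> 2" and "K > 0" and "\<epsilon> > 0"
  shows "\<exists>C > 0. \<forall>(V :: nat set) (E :: nat \<Rightarrow> nat \<Rightarrow> bool) A B.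
     simple_graph V E \<longrightarrow> \<not> contains_Kss V E s \<longrightarrow>
     A \<union> B = V \<longrightarrow> A \<inter> B = {} \<longrightarrow>
     real (cross_edges A B E) \<ge> C * real (card V) powr (1 + 1 / real k) \<longrightarrow>
     almost_regular K V (cross_deg V A B E) \<longrightarrow>
     real (card {p \<in> alt_paths V A B E k. induced_path E p})
       \<ge> (1 - \<epsilon>) * real (card (alt_paths V A B E k))"
proof -
  define \<eta> where "\<eta> = \<epsilon> / ((real k + 1)\<^sup>2 * (2 * K) ^ k)"
  define C where "C = 2 * real s / \<eta> + (2 * real s / \<eta>) ^ (s + 1) + 2 * real k * K"
  have "C > 0" unfolding C_def \<eta>_def using assms by (simp add: add_pos_nonneg)
  show ?thesis
  proof (intro exI[of _ C] conjI allI impI \<open>C > 0\<close>)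
    fix V E A B
    assume G: "simple_graph V E" and Kss_free: "\<not> contains_Kss V E s" and "A \<union> B = V"
      and dense: "real (cross_edges A B E) \<ge> C * real (card V) powr (1 + 1 / real k)"
      and regular: "almost_regular K V (cross_deg V A B E)"
    show "(1 - \<epsilon>) * real (card (alt_paths V A B E k))
      \<le> card {p \<in> alt_paths V A B E k. induced_path E p}"
    proof (cases "V = {}")
      case True
      then have "alt_paths V A B E k = {}" by (auto simp: alt_paths_def)
      then show ?thesis by simp
    next
      case False
      then have "card V \<ge> 1" using G by (simp add: Suc_le_eq card_gt_0_iff simple_graph_def)
      then have "C * card V \<le> C * card V powr (1 + 1 / real k)"
        using \<open>C > 0\<close> powr_mono[of 1 "1 + 1 / real k" "card V"] by simp
      also have "\<dots> \<le> card V * real (Max (cross_deg V A B E ` V))"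
        using dense cross_edges_le_card_mult_Max_cross_deg[OF G, of A B] \<open>A \<union> B = V\<close>
        by (metis Un_upper1 of_nat_le_iff of_nat_mult order_trans)
      finally have "C \<le> Max (cross_deg V A B E ` V)" using \<open>card V \<ge> 1\<close> by (simp add: mult.commute)
      with assms(2) show ?thesis
        unfolding C_def \<eta>_def
        by (intro induced_alt_paths_ge[OF G Kss_free assms(1) _ assms(3,4) False regular]) simp_all
    qed
  qed
qed

end
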